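(* In the Banach space $\ell^\infty=(\ell^1)^*$ equipped with the weak$^*$ topology $\sigma(\ell^\infty,\ell^1)$, the set $A=\{e_1+e_n : n\in\mathbb{N}, n\ge 2\}$ is minimal but not topologically independent.
   Context: $e_i\in\ell^\infty$ denotes the sequence with $1$ in coordinate $i$ and $0$ elsewhere. A subset $A\subseteq X\setminus\{0\}$ of a topological vector space $X$ is topologically independent if for every neighborhood $W$ of $0$ there is a neighborhood $U$ of $0$ such that for every finite $F\subseteq A$ and integers $\{z_a: a\in F\}$, $\sum_{a\in F}z_a a\in U$ implies $z_a a\in W$ for all $a\in F$. $A$ is minimal if $a\notin\overline{\langle A\setminus\{a\}\rangle_{\mathbb{R}}}$ for every $a\in A$ (linear span, closure in $X$). *)

theory Defs
  imports "HOL-Analysis.Analysis"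
begin

text \<open>Sequences are modelled as functions nat => real; the paper's coordinate i (i >= 1)
  is stored at index i - 1 (so the paper's N = {1,2,...} is represented by nat via shift).\<close>

definition linf :: "(nat \<Rightarrow> real) set" where
  "linf = {x. bounded (range x)}"

definition lone :: "(nat \<Rightarrow> real) set" where
  "lone = {y. summable (\<lambda>k. \<bar>y k\<bar>)}"

definition pairing :: "(nat \<Rightarrow> real) \<Rightarrow> (nat \<Rightarrow> real) \<Rightarrow> real" where
  "pairing x y = (\<Sum>k. x k * y k)"

definition weak_star :: "(nat \<Rightarrow> real) topology" where
  "weak_star = topology_generated_by
     {{x \<in> linf. pairing x y \<in> V} | y V. y \<in> lone \<and> open V}"

text \<open>Unit vector e_i (paper's indexing, i >= 1): 1 at coordinate i, 0 elsewhere.\<close>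
definition unitv :: "nat \<Rightarrow> (nat \<Rightarrow> real)" where
  "unitv i = (\<lambda>k. if Suc k = i then 1 else 0)"

definition nhd0 :: "(nat \<Rightarrow> real) topology \<Rightarrow> (nat \<Rightarrow> real) set \<Rightarrow> bool" where
  "nhd0 T W \<longleftrightarrow> W \<subseteq> topspace T \<and> (\<exists>V. openin T V \<and> (\<lambda>k. 0) \<in> V \<and> V \<subseteq> W)"

definition top_indep :: "(nat \<Rightarrow> real) topology \<Rightarrow> (nat \<Rightarrow> real) set \<Rightarrow> bool" where
  "top_indep T A \<longleftrightarrow> A \<subseteq> topspace T - {(\<lambda>k. 0)} \<and>
     (\<forall>W. nhd0 T W \<longrightarrow> (\<exists>U. nhd0 T U \<and>
        (\<forall>F z. finite F \<and> F \<subseteq> A \<and> (\<lambda>k. \<Sum>a\<in>F. real_of_int (z a) * a k) \<in> U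
           \<longrightarrow> (\<forall>a\<in>F. (\<lambda>k. real_of_int (z a) * a k) \<in> W))))"

definition rspan :: "(nat \<Rightarrow> real) set \<Rightarrow> (nat \<Rightarrow> real) set" where
  "rspan S = {(\<lambda>k. \<Sum>a\<in>F. c a * a k) | F c. finite F \<and> F \<subseteq> S}"

definition minimal_set :: "(nat \<Rightarrow> real) topology \<Rightarrow> (nat \<Rightarrow> real) set \<Rightarrow> bool" where
  "minimal_set T A \<longleftrightarrow> (\<forall>a\<in>A. a \<notin> T closure_of (rspan (A - {a})))"

end

theory Submission
  imports Defs
begin

text \<open>Pairing with \<open>e\<^sub>n\<close> is a weak-star continuous functional that is nonzero on \<open>e\<^sub>1 + e\<^sub>n\<close>
  and vanishes on every other \<open>e\<^sub>1 + e\<^sub>m\<close>, hence on the closure of their span; this gives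
  minimality. On the other hand \<open>e\<^sub>n - e\<^sub>n\<^sub>+\<^sub>1 \<rightarrow> 0\<close> weak-star, because every summable sequence
  tends to \<open>0\<close>. So the integer combination \<open>(e\<^sub>1 + e\<^sub>n) - (e\<^sub>1 + e\<^sub>n\<^sub>+\<^sub>1)\<close> enters every
  neighbourhood of \<open>0\<close>, while its summand \<open>e\<^sub>1 + e\<^sub>n\<close> never enters \<open>{x. x\<^sub>1 < 1/2}\<close>.\<close>

lemma unitv_Suc: "unitv (Suc j) = (\<lambda>k. if k = j then 1 else 0)"
  by (auto simp: unitv_def)

lemma unitv_in_lone: "unitv i \<in> lone"
proof (cases i)
  case 0
  then show ?thesis by (simp add: lone_def unitv_def)
next
  case (Suc j)
  have "(\<lambda>k. \<bar>unitv (Suc j) k\<bar>) = (\<lambda>k. if k = j then 1 else 0)"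
    by (simp add: unitv_Suc)
  with Suc show ?thesis
    unfolding lone_def by (simp add: summable_single)
qed

lemma pairing_unitv_Suc: "pairing x (unitv (Suc j)) = x j"
proof -
  have "(\<lambda>k. x k * unitv (Suc j) k) = (\<lambda>k. if k = j then x k else 0)"
    by (auto simp: unitv_Suc)
  then show ?thesis
    unfolding pairing_def using sums_single[of j x] by (simp add: sums_iff)
qed

lemma pairing_zero_left: "pairing (\<lambda>k. 0) y = 0"
  by (simp add: pairing_def)

lemma linf_if_range_subset_finite: "finite S \<Longrightarrow> range x \<subseteq> S \<Longrightarrow> x \<in> linf"
  unfolding linf_def using bounded_subset finite_imp_bounded by blast

lemma topspace_weak_star: "topspace weak_star = linf"
proof -
  have "linf \<in> {{x \<in> linf. pairing x y \<in> V} | y V. y \<in> lone \<and> open V}"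
    by (intro CollectI exI[of _ "\<lambda>_. 0"] exI[of _ UNIV]) (simp add: lone_def)
  then show ?thesis
    unfolding weak_star_def topology_generated_by_topspace by auto
qed

lemma openin_weak_star_pairing:
  "y \<in> lone \<Longrightarrow> open V \<Longrightarrow> openin weak_star {x \<in> linf. pairing x y \<in> V}"
  unfolding weak_star_def by (rule topology_generated_by_Basis) auto

lemma openin_weak_star_coordinate:
  "open V \<Longrightarrow> openin weak_star {x \<in> linf. x j \<in> V}"
  using openin_weak_star_pairing[OF unitv_in_lone, of V "Suc j"]
  by (simp add: pairing_unitv_Suc)

lemma limitin_weak_star:
  assumes "L \<in> linf" "eventually (\<lambda>i. u i \<in> linf) F"
    and "\<And>y. y \<in> lone \<Longrightarrow> ((\<lambda>i. pairing (u i) y) \<longlongrightarrow> pairing L y) F"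
  shows "limitin weak_star u L F"
  unfolding limitin_def topspace_weak_star
proof (intro conjI allI impI)
  fix V assume "openin weak_star V \<and> L \<in> V"
  then have "generate_topology_on {{x \<in> linf. pairing x y \<in> V} | y V. y \<in> lone \<and> open V} V"
    and "L \<in> V"
    by (auto simp: weak_star_def openin_topology_generated_by_iff)
  then show "eventually (\<lambda>i. u i \<in> V) F"
  proof (induction rule: generate_topology_on.induct)
    case (Int a b)
    then show ?case by (auto intro: eventually_conj elim: eventually_mono)
  next
    case (UN K)
    then obtain k where "k \<in> K" "L \<in> k" by auto
    with UN.IH have "eventually (\<lambda>i. u i \<in> k) F" by blast
    then show ?case by (rule eventually_mono) (use \<open>k \<in> K\<close> in blast)
  next
    case (Basis s)
    then obtain y W where s: "s = {x \<in> linf. pairing x y \<in> W}" "y \<in> lone" "open W"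
      by auto
    with Basis.prems have "eventually (\<lambda>i. pairing (u i) y \<in> W) F"
      using assms(3) topological_tendstoD by blast
    with assms(2) show ?case
      unfolding s(1) by (auto elim: eventually_elim2)
  qed simp
qed (fact assms)

lemma unitv_differences_tendsto_zero:
  "limitin weak_star (\<lambda>j k. unitv (Suc j) k - unitv (Suc (Suc j)) k) (\<lambda>k. 0) sequentially"
proof (rule limitin_weak_star)
  show "(\<lambda>k. 0::real) \<in> linf"
    by (rule linf_if_range_subset_finite[of "{0}"]) auto
  have "(\<lambda>k. unitv (Suc j) k - unitv (Suc (Suc j)) k) \<in> linf" for j
    by (rule linf_if_range_subset_finite[of "{-1, 0, 1}"]) (auto simp: unitv_Suc split: if_splits)
  then show "eventually (\<lambda>j. (\<lambda>k. unitv (Suc j) k - unitv (Suc (Suc j)) k) \<in> linf) sequentially"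
    by simp
next
  fix y assume "y \<in> lone"
  then have "(\<lambda>k. \<bar>y k\<bar>) \<longlonglongrightarrow> 0"
    unfolding lone_def by (intro summable_LIMSEQ_zero) simp
  then have "y \<longlonglongrightarrow> 0"
    by (simp add: tendsto_rabs_zero_iff)
  then have "(\<lambda>j. y j - y (Suc j)) \<longlonglongrightarrow> 0 - 0"
    by (intro tendsto_diff LIMSEQ_Suc)
  moreover have "(\<lambda>k. (unitv (Suc j) k - unitv (Suc (Suc j)) k) * y k)
      sums (y j - y (Suc j))" for j
  proof -
    have "(\<lambda>k. (if k = j then y k else 0) - (if k = Suc j then y k else 0))
        sums (y j - y (Suc j))"
      by (intro sums_diff sums_single)
    moreover have "(\<lambda>k. (unitv (Suc j) k - unitv (Suc (Suc j)) k) * y k)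
        = (\<lambda>k. (if k = j then y k else 0) - (if k = Suc j then y k else 0))"
      by (auto simp: unitv_Suc)
    ultimately show ?thesis by simp
  qed
  ultimately show "(\<lambda>j. pairing (\<lambda>k. unitv (Suc j) k - unitv (Suc (Suc j)) k) y)
      \<longlonglongrightarrow> pairing (\<lambda>k. 0) y"
    by (simp add: pairing_def pairing_zero_left sums_iff)
qed

lemma coordinate_separates_from_closure_rspan:
  assumes "a \<in> linf" "a j \<noteq> 0" "\<And>b. b \<in> S \<Longrightarrow> b j = 0"
  shows "a \<notin> weak_star closure_of rspan S"
proof -
  let ?O = "{x \<in> linf. x j \<in> - {0}}"
  have "x j = 0" if "x \<in> rspan S" for x
  proof -
    from that obtain F c where "x = (\<lambda>k. \<Sum>b\<in>F. c b * b k)" "F \<subseteq> S"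
      unfolding rspan_def by blast
    then show ?thesis
      using assms(3) by (auto intro!: sum.neutral)
  qed
  then have "?O \<inter> rspan S = {}"
    by blast
  moreover have "openin weak_star ?O"
    by (intro openin_weak_star_coordinate open_Compl closed_singleton)
  ultimately have "?O \<inter> weak_star closure_of rspan S = {}"
    by (simp add: openin_Int_closure_of_eq_empty)
  moreover have "a \<in> ?O"
    using assms(1,2) by simp
  ultimately show ?thesis
    by blast
qed

lemma not_top_indep_by_differences:
  assumes "nhd0 T W"
    and "\<And>U. nhd0 T U \<Longrightarrow> \<exists>a\<in>A. \<exists>b\<in>A. a \<noteq> b \<and> (\<lambda>k. a k - b k) \<in> U \<and> a \<notin> W"
  shows "\<not> top_indep T A"
proof
  assume "top_indep T A"
  then have "\<forall>W. nhd0 T W \<longrightarrow> (\<exists>U. nhd0 T U \<and> (\<forall>F z. finite F \<and> F \<subseteq> A \<and>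
      (\<lambda>k. \<Sum>a\<in>F. real_of_int (z a) * a k) \<in> U \<longrightarrow> (\<forall>a\<in>F. (\<lambda>k. real_of_int (z a) * a k) \<in> W)))"
    by (simp add: top_indep_def)
  from this[rule_format, OF assms(1)] obtain U where "nhd0 T U" and indep: "\<forall>F z. finite F \<and> F \<subseteq> A \<and>
      (\<lambda>k. \<Sum>a\<in>F. real_of_int (z a) * a k) \<in> U \<longrightarrow> (\<forall>a\<in>F. (\<lambda>k. real_of_int (z a) * a k) \<in> W)"
    by blast
  from assms(2)[OF \<open>nhd0 T U\<close>] obtain a b
    where ab: "a \<in> A" "b \<in> A" "a \<noteq> b" "(\<lambda>k. a k - b k) \<in> U" "a \<notin> W"
    by blast
  define z :: "(nat \<Rightarrow> real) \<Rightarrow> int" where "z c = (if c = a then 1 else -1)" for c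
  have z: "z a = 1" "z b = -1"
    using ab(3) by (simp_all add: z_def)
  have "(\<lambda>k. \<Sum>c\<in>{a, b}. real_of_int (z c) * c k) = (\<lambda>k. a k - b k)"
    using ab(3) by (simp add: z)
  with ab(1,2,4) have "finite {a, b} \<and> {a, b} \<subseteq> A \<and> (\<lambda>k. \<Sum>c\<in>{a, b}. real_of_int (z c) * c k) \<in> U"
    by simp
  then have "\<forall>c\<in>{a, b}. (\<lambda>k. real_of_int (z c) * c k) \<in> W"
    using indep by blast
  then have "(\<lambda>k. real_of_int (z a) * a k) \<in> W"
    by blast
  with ab(5) show False
    by (simp add: z)
qed

lemma unitv_1_plus_unitv:
  "n \<ge> 2 \<Longrightarrow> unitv (Suc 0) k + unitv n k = (if k = 0 \<or> k = n - 1 then 1 else 0)"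
  by (auto simp: unitv_def)

lemma minimal_set_unitv_1_plus_unitv:
  "minimal_set weak_star {(\<lambda>k. unitv 1 k + unitv n k) | n. n \<ge> 2}"
  unfolding minimal_set_def
proof
  fix a assume "a \<in> {(\<lambda>k. unitv 1 k + unitv n k) | n. n \<ge> 2}"
  then obtain n where n: "n \<ge> 2" and a: "a = (\<lambda>k. unitv 1 k + unitv n k)"
    by auto
  show "a \<notin> weak_star closure_of rspan ({(\<lambda>k. unitv 1 k + unitv n k) | n. n \<ge> 2} - {a})"
  proof (rule coordinate_separates_from_closure_rspan)
    show "a \<in> linf"
      using n by (intro linf_if_range_subset_finite[of "{0, 1}"]) (auto simp: a unitv_1_plus_unitv)
    show "a (n - 1) \<noteq> 0"
      using n by (simp add: a unitv_1_plus_unitv)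
  next
    fix b assume "b \<in> {(\<lambda>k. unitv 1 k + unitv n k) | n. n \<ge> 2} - {a}"
    then obtain m where "m \<ge> 2" "m \<noteq> n" "b = (\<lambda>k. unitv 1 k + unitv m k)"
      using a by auto
    with n show "b (n - 1) = 0"
      by (auto simp: unitv_1_plus_unitv)
  qed
qed

lemma not_top_indep_unitv_1_plus_unitv:
  "\<not> top_indep weak_star {(\<lambda>k. unitv 1 k + unitv n k) | n. n \<ge> 2}"
proof (rule not_top_indep_by_differences)
  let ?W = "{x \<in> linf. x 0 \<in> {..<1/2}}"
  have "openin weak_star ?W"
    by (rule openin_weak_star_coordinate) simp
  moreover have "(\<lambda>k. 0) \<in> ?W"
    by (simp add: linf_if_range_subset_finite[of "{0}"])
  ultimately show "nhd0 weak_star ?W"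
    unfolding nhd0_def topspace_weak_star by blast
  fix U assume "nhd0 weak_star U"
  then obtain V where V: "openin weak_star V" "(\<lambda>k. 0) \<in> V" "V \<subseteq> U"
    by (auto simp: nhd0_def)
  then have "eventually (\<lambda>j. (\<lambda>k. unitv (Suc j) k - unitv (Suc (Suc j)) k) \<in> V) sequentially"
    using unitv_differences_tendsto_zero by (simp add: limitin_def)
  then obtain N where N: "\<And>j. j \<ge> N \<Longrightarrow> (\<lambda>k. unitv (Suc j) k - unitv (Suc (Suc j)) k) \<in> V"
    unfolding eventually_sequentially by blast
  define j where "j = max N 1"
  have j: "j \<ge> 1" "(\<lambda>k. unitv (Suc j) k - unitv (Suc (Suc j)) k) \<in> V"
    using N by (simp_all add: j_def)
  let ?a = "\<lambda>k. unitv 1 k + unitv (Suc j) k" and ?b = "\<lambda>k. unitv 1 k + unitv (Suc (Suc j)) k"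
  show "\<exists>a\<in>{(\<lambda>k. unitv 1 k + unitv n k) | n. n \<ge> 2}.
      \<exists>b\<in>{(\<lambda>k. unitv 1 k + unitv n k) | n. n \<ge> 2}. a \<noteq> b \<and> (\<lambda>k. a k - b k) \<in> U \<and> a \<notin> ?W"
  proof (rule bexI[of _ ?a], rule bexI[of _ ?b], intro conjI)
    show "?a \<noteq> ?b"
    proof
      assume "?a = ?b"
      then have "?a j = ?b j" by (rule fun_cong)
      then show False by (simp add: unitv_def)
    qed
    show "(\<lambda>k. ?a k - ?b k) \<in> U"
      using j(2) V(3) by auto
    show "?a \<notin> ?W"
      by (simp add: unitv_def)
    show "?b \<in> {(\<lambda>k. unitv 1 k + unitv n k) | n. n \<ge> 2}"
      by (intro CollectI exI[of _ "Suc (Suc j)"]) simp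
    show "?a \<in> {(\<lambda>k. unitv 1 k + unitv n k) | n. n \<ge> 2}"
      using j(1) by (intro CollectI exI[of _ "Suc j"]) simp
  qed
qed

theorem mainTheorem14:
  shows "minimal_set weak_star {(\<lambda>k. unitv 1 k + unitv n k) | n. n \<ge> 2}
       \<and> \<not> top_indep weak_star {(\<lambda>k. unitv 1 k + unitv n k) | n. n \<ge> 2}"
  using minimal_set_unitv_1_plus_unitv not_top_indep_unitv_1_plus_unitv ..

end
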